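(* Let $X\in\mathbb{R}^n$ be a sub-Gaussian random vector with variance proxy $\sigma^2>0$. Then for any $\delta\in(0,1)$ and any $\varepsilon\in(0,1)$, $$\mathbb{P}\left(\|X\|\le \sigma\sqrt{\frac{\log\frac{1}{1-\varepsilon^2}}{\varepsilon^2}\,n+\frac{2}{\varepsilon^2}\log\frac{1}{\delta}}\right)\ge 1-\delta.$$
   Context: A random vector $X\in\mathbb{R}^n$ is sub-Gaussian with variance proxy $\sigma^2>0$ if $\mathbb{E}\left[e^{\lambda\langle \ell, X\rangle}\right]\le e^{\lambda^2\sigma^2/2}$ for all $\lambda\in\mathbb{R}$ and all $\ell\in\mathcal{S}^{n-1}=\{x\in\mathbb{R}^n:\|x\|=1\}$. $\|\cdot\|$ denotes the Euclidean norm. *)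

theory Defs
  imports "HOL-Probability.Probability"
begin

text \<open>The expectation of the nonnegative quantity is taken
as a nonnegative (extended) integral, so it is always defined.\<close>

definition sub_gaussian_vec :: "'a measure \<Rightarrow> ('a \<Rightarrow> real ^ 'n) \<Rightarrow> real \<Rightarrow> bool" where
  "sub_gaussian_vec M X \<sigma>2 \<longleftrightarrow>
     X \<in> borel_measurable M \<and>
     (\<forall>t::real. \<forall>l::real ^ 'n. norm l = 1 \<longrightarrow>
        (\<integral>\<^sup>+ \<omega>. ennreal (exp (t * (l \<bullet> X \<omega>))) \<partial>M) \<le> ennreal (exp (t\<^sup>2 * \<sigma>2 / 2)))"

end

theory Submission
  imports Defs
begin

text \<open>Gaussian averaging: for a standard Gaussian vector g, E_g exp (s <g, x>) = exp (s^2 |x|^2 / 2).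
Integrating over X and exchanging the two integrations (Tonelli), the sub-Gaussian bound in the
random direction g gives E exp (s^2 |X|^2 / 2) <= E_g exp (s^2 sigma^2 |g|^2 / 2)
= (1 - s^2 sigma^2)^(-n/2) whenever s^2 sigma^2 < 1. The Chernoff bound for |X|^2 with
s = epsilon / sigma then yields the stated radius.\<close>

abbreviation std_normal :: "real measure" where
  "std_normal \<equiv> density lborel std_normal_density"

abbreviation std_gaussian :: "'i set \<Rightarrow> ('i \<Rightarrow> real) measure" where
  "std_gaussian I \<equiv> PiM I (\<lambda>_. std_normal)"

lemma prob_space_std_normal: "prob_space std_normal"
  by (rule prob_space_normal_density) simp

lemma product_sigma_finite_std_normal: "product_sigma_finite (\<lambda>_::'i. std_normal)"
  by (simp add: product_sigma_finite_def prob_space_imp_sigma_finite prob_space_std_normal)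

lemma prob_space_std_gaussian: "prob_space (std_gaussian I)"
  by (intro prob_space_PiM prob_space_std_normal)

lemma nn_integral_std_normal_density: "(\<integral>\<^sup>+x. ennreal (std_normal_density x) \<partial>lborel) = 1"
  by (subst nn_integral_eq_integral) auto

lemma nn_integral_std_normal:
  assumes [measurable]: "f \<in> borel_measurable borel"
  shows "(\<integral>\<^sup>+x. ennreal (f x) \<partial>std_normal) = (\<integral>\<^sup>+x. ennreal (std_normal_density x * f x) \<partial>lborel)"
  by (subst nn_integral_density) (auto simp: ennreal_mult')

lemma nn_integral_std_normal_exp_linear:
  "(\<integral>\<^sup>+x. ennreal (exp (a * x)) \<partial>std_normal) = ennreal (exp (a\<^sup>2 / 2))"
proof -
  have completing_square:
    "std_normal_density x * exp (a * x) = exp (a\<^sup>2 / 2) * std_normal_density (x - a)" for x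
  proof -
    have "- x\<^sup>2 / 2 + a * x = a\<^sup>2 / 2 + - (x - a)\<^sup>2 / 2"
      by (simp add: power2_eq_square field_simps)
    then show ?thesis
      by (simp add: std_normal_density_def mult_exp_exp)
  qed
  have "(\<integral>\<^sup>+x. ennreal (std_normal_density (x - a)) \<partial>lborel) = 1"
    using nn_integral_real_affine[of "\<lambda>x. ennreal (std_normal_density x)" 1 "- a"]
    by (simp add: nn_integral_std_normal_density)
  then show ?thesis
    by (simp add: nn_integral_std_normal completing_square ennreal_mult nn_integral_cmult)
qed

lemma nn_integral_std_normal_exp_square:
  assumes "b < 1"
  shows "(\<integral>\<^sup>+x. ennreal (exp (b * x\<^sup>2 / 2)) \<partial>std_normal) = ennreal (1 / sqrt (1 - b))"
proof -
  define c where "c = sqrt (1 - b)"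
  have "c > 0" and c2: "c\<^sup>2 = 1 - b"
    using assms by (simp_all add: c_def)
  have rescale: "std_normal_density x * exp (b * x\<^sup>2 / 2) = std_normal_density (0 + c * x)" for x
  proof -
    have "- x\<^sup>2 / 2 + b * x\<^sup>2 / 2 = - (c * x)\<^sup>2 / 2"
      by (simp add: c2 algebra_simps)
    then show ?thesis
      by (simp add: std_normal_density_def mult_exp_exp)
  qed
  define I where "I = (\<integral>\<^sup>+x. ennreal (exp (b * x\<^sup>2 / 2)) \<partial>std_normal)"
  have "1 = ennreal c * I"
    using nn_integral_real_affine[of "\<lambda>x. ennreal (std_normal_density x)" c 0] \<open>c > 0\<close>
    by (simp add: nn_integral_std_normal_density I_def nn_integral_std_normal rescale)
  then have "ennreal (1 / c) = ennreal (1 / c) * ennreal c * I"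
    by (simp add: mult.assoc)
  also have "ennreal (1 / c) * ennreal c = 1"
    using \<open>c > 0\<close> by (simp flip: ennreal_mult)
  finally show ?thesis
    by (simp add: I_def c_def)
qed

lemma nn_integral_std_gaussian_exp_sum:
  assumes "finite I"
  shows "(\<integral>\<^sup>+g. ennreal (exp (\<Sum>i\<in>I. a i * g i)) \<partial>std_gaussian I)
       = ennreal (exp ((\<Sum>i\<in>I. (a i)\<^sup>2) / 2))"
proof -
  interpret product_sigma_finite "\<lambda>_::'i. std_normal"
    by (rule product_sigma_finite_std_normal)
  have "(\<integral>\<^sup>+g. ennreal (exp (\<Sum>i\<in>I. a i * g i)) \<partial>std_gaussian I)
      = (\<integral>\<^sup>+g. (\<Prod>i\<in>I. ennreal (exp (a i * g i))) \<partial>std_gaussian I)"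
    using assms by (simp add: exp_sum prod_ennreal)
  also have "\<dots> = (\<Prod>i\<in>I. \<integral>\<^sup>+x. ennreal (exp (a i * x)) \<partial>std_normal)"
    using assms by (intro product_nn_integral_prod) auto
  also have "\<dots> = ennreal (exp ((\<Sum>i\<in>I. (a i)\<^sup>2) / 2))"
    using assms by (simp add: nn_integral_std_normal_exp_linear prod_ennreal exp_sum sum_divide_distrib)
  finally show ?thesis .
qed

lemma nn_integral_std_gaussian_exp_sum_square:
  assumes "finite I" and "b < 1"
  shows "(\<integral>\<^sup>+g. ennreal (exp (b * (\<Sum>i\<in>I. (g i)\<^sup>2) / 2)) \<partial>std_gaussian I)
       = ennreal ((1 / sqrt (1 - b)) ^ card I)"
proof -
  interpret product_sigma_finite "\<lambda>_::'i. std_normal"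
    by (rule product_sigma_finite_std_normal)
  have "(\<integral>\<^sup>+g. ennreal (exp (b * (\<Sum>i\<in>I. (g i)\<^sup>2) / 2)) \<partial>std_gaussian I)
      = (\<integral>\<^sup>+g. (\<Prod>i\<in>I. ennreal (exp (b * (g i)\<^sup>2 / 2))) \<partial>std_gaussian I)"
    using assms by (simp add: exp_sum prod_ennreal sum_distrib_left sum_divide_distrib)
  also have "\<dots> = (\<Prod>i\<in>I. \<integral>\<^sup>+x. ennreal (exp (b * x\<^sup>2 / 2)) \<partial>std_normal)"
    using assms by (intro product_nn_integral_prod) auto
  also have "\<dots> = ennreal ((1 / sqrt (1 - b)) ^ card I)"
    using assms by (simp add: nn_integral_std_normal_exp_square ennreal_power)
  finally show ?thesis .
qed

lemma sub_gaussian_vec_nn_integral_exp_inner: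
  assumes "prob_space M" and "sub_gaussian_vec M X \<sigma>2"
  shows "(\<integral>\<^sup>+\<omega>. ennreal (exp (v \<bullet> X \<omega>)) \<partial>M) \<le> ennreal (exp (\<sigma>2 * (norm v)\<^sup>2 / 2))"
proof (cases "v = 0")
  case True
  then show ?thesis
    by (simp add: prob_space.emeasure_space_1[OF assms(1)])
next
  case False
  have "norm (v /\<^sub>R norm v) = 1"
    using False by simp
  then have "(\<integral>\<^sup>+\<omega>. ennreal (exp (norm v * ((v /\<^sub>R norm v) \<bullet> X \<omega>))) \<partial>M)
      \<le> ennreal (exp ((norm v)\<^sup>2 * \<sigma>2 / 2))"
    using assms(2) unfolding sub_gaussian_vec_def by blast
  moreover have "norm v * ((v /\<^sub>R norm v) \<bullet> X \<omega>) = v \<bullet> X \<omega>" for \<omega>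
    using False by simp
  ultimately show ?thesis
    by (simp only: mult.commute[of "(norm v)\<^sup>2"])
qed

lemma sub_gaussian_vec_nn_integral_exp_norm_sq:
  fixes X :: "'a \<Rightarrow> real ^ 'n"
  assumes "prob_space M" and "sub_gaussian_vec M X \<sigma>2" and "\<sigma>2 * s\<^sup>2 < 1"
  shows "(\<integral>\<^sup>+\<omega>. ennreal (exp (s\<^sup>2 * (norm (X \<omega>))\<^sup>2 / 2)) \<partial>M)
       \<le> ennreal ((1 / sqrt (1 - \<sigma>2 * s\<^sup>2)) ^ CARD('n))"
proof -
  let ?G = "std_gaussian (UNIV :: 'n set)"
  interpret pair_sigma_finite M ?G
    using prob_space_imp_sigma_finite[OF assms(1)] prob_space_imp_sigma_finite[OF prob_space_std_gaussian]
    by (simp add: pair_sigma_finite_def)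
  have [measurable]: "X \<in> borel_measurable M"
    using assms(2) unfolding sub_gaussian_vec_def by blast
  have [measurable]: "(\<lambda>\<omega>. X \<omega> $ i) \<in> borel_measurable M" for i
    by (rule measurable_compose[OF \<open>X \<in> borel_measurable M\<close>])
      (intro borel_measurable_continuous_onI continuous_intros)
  have averaging: "ennreal (exp (s\<^sup>2 * (norm x)\<^sup>2 / 2))
      = (\<integral>\<^sup>+g. ennreal (exp (\<Sum>i\<in>UNIV. (s * x $ i) * g i)) \<partial>?G)" for x :: "real ^ 'n"
  proof -
    have "s\<^sup>2 * (norm x)\<^sup>2 = (\<Sum>i\<in>UNIV. (s * x $ i)\<^sup>2)"
      unfolding power2_norm_eq_inner inner_vec_def
      by (simp add: power2_eq_square sum_distrib_left mult_ac)
    then show ?thesis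
      by (simp add: nn_integral_std_gaussian_exp_sum)
  qed
  have sub_gaussian: "(\<integral>\<^sup>+\<omega>. ennreal (exp (\<Sum>i\<in>UNIV. (s * X \<omega> $ i) * g i)) \<partial>M)
      \<le> ennreal (exp (\<sigma>2 * s\<^sup>2 * (\<Sum>i\<in>UNIV. (g i)\<^sup>2) / 2))" for g
  proof -
    define v :: "real ^ 'n" where "v = (\<chi> i. s * g i)"
    have "(\<Sum>i\<in>UNIV. (s * X \<omega> $ i) * g i) = v \<bullet> X \<omega>" for \<omega>
      by (simp add: v_def inner_vec_def mult_ac)
    moreover have "(norm v)\<^sup>2 = s\<^sup>2 * (\<Sum>i\<in>UNIV. (g i)\<^sup>2)"
      unfolding power2_norm_eq_inner inner_vec_def
      by (simp add: v_def sum_distrib_left power2_eq_square mult_ac)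
    ultimately show ?thesis
      using sub_gaussian_vec_nn_integral_exp_inner[OF assms(1,2), of v] by (simp add: mult.assoc)
  qed
  have "(\<integral>\<^sup>+\<omega>. ennreal (exp (s\<^sup>2 * (norm (X \<omega>))\<^sup>2 / 2)) \<partial>M)
      = (\<integral>\<^sup>+\<omega>. \<integral>\<^sup>+g. ennreal (exp (\<Sum>i\<in>UNIV. (s * X \<omega> $ i) * g i)) \<partial>?G \<partial>M)"
    by (simp only: averaging)
  also have "\<dots> = (\<integral>\<^sup>+g. \<integral>\<^sup>+\<omega>. ennreal (exp (\<Sum>i\<in>UNIV. (s * X \<omega> $ i) * g i)) \<partial>M \<partial>?G)"
    by (rule Fubini'[symmetric]) measurable
  also have "\<dots> \<le> (\<integral>\<^sup>+g. ennreal (exp (\<sigma>2 * s\<^sup>2 * (\<Sum>i\<in>UNIV. (g i)\<^sup>2) / 2)) \<partial>?G)"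
    by (intro nn_integral_mono sub_gaussian)
  also have "\<dots> = ennreal ((1 / sqrt (1 - \<sigma>2 * s\<^sup>2)) ^ CARD('n))"
    using assms(3) by (intro nn_integral_std_gaussian_exp_sum_square) auto
  finally show ?thesis .
qed

lemma sub_gaussian_vec_norm_tail:
  fixes X :: "'a \<Rightarrow> real ^ 'n"
  assumes "prob_space M" and "sub_gaussian_vec M X \<sigma>2"
    and "s \<noteq> 0" and "\<sigma>2 * s\<^sup>2 < 1" and "0 \<le> r"
  shows "measure M {\<omega> \<in> space M. r \<le> norm (X \<omega>)}
       \<le> (1 / sqrt (1 - \<sigma>2 * s\<^sup>2)) ^ CARD('n) * exp (- (s\<^sup>2 * r\<^sup>2) / 2)"
proof -
  interpret prob_space M by fact
  have [measurable]: "X \<in> borel_measurable M"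
    using assms(2) unfolding sub_gaussian_vec_def by blast
  have "{\<omega> \<in> space M. r \<le> norm (X \<omega>)} = {\<omega> \<in> space M. r\<^sup>2 \<le> (norm (X \<omega>))\<^sup>2}"
    using assms(5) by auto
  also have "emeasure M \<dots> \<le> ennreal (exp (- (s\<^sup>2 / 2) * r\<^sup>2))
      * (\<integral>\<^sup>+\<omega>. ennreal (exp (s\<^sup>2 / 2 * (norm (X \<omega>))\<^sup>2)) * indicator (space M) \<omega> \<partial>M)"
    using assms(3) by (intro Chernoff_ineq_nn_integral_ge) auto
  also have "\<dots> \<le> ennreal (exp (- (s\<^sup>2 / 2) * r\<^sup>2)) * ennreal ((1 / sqrt (1 - \<sigma>2 * s\<^sup>2)) ^ CARD('n))"
  proof (intro mult_left_mono)
    have "(\<integral>\<^sup>+\<omega>. ennreal (exp (s\<^sup>2 / 2 * (norm (X \<omega>))\<^sup>2)) * indicator (space M) \<omega> \<partial>M)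
        = (\<integral>\<^sup>+\<omega>. ennreal (exp (s\<^sup>2 * (norm (X \<omega>))\<^sup>2 / 2)) \<partial>M)"
      by (intro nn_integral_cong) simp
    with sub_gaussian_vec_nn_integral_exp_norm_sq[OF assms(1,2,4)]
    show "(\<integral>\<^sup>+\<omega>. ennreal (exp (s\<^sup>2 / 2 * (norm (X \<omega>))\<^sup>2)) * indicator (space M) \<omega> \<partial>M)
        \<le> ennreal ((1 / sqrt (1 - \<sigma>2 * s\<^sup>2)) ^ CARD('n))"
      by simp
  qed simp
  finally show ?thesis
    using assms(4) by (simp add: emeasure_eq_measure ennreal_mult[symmetric] mult.commute)
qed

lemma tail_bound_at_radius_eq:
  assumes "0 < \<epsilon>" and "\<epsilon> < 1" and "0 < \<delta>"
  shows "(1 / sqrt (1 - \<epsilon>\<^sup>2)) ^ n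
       * exp (- (\<epsilon>\<^sup>2 * (ln (1 / (1 - \<epsilon>\<^sup>2)) / \<epsilon>\<^sup>2 * real n + 2 / \<epsilon>\<^sup>2 * ln (1 / \<delta>))) / 2)
     = \<delta>"
proof -
  define L where "L = ln (1 / (1 - \<epsilon>\<^sup>2))"
  have "0 < \<epsilon>\<^sup>2" and "\<epsilon>\<^sup>2 < 1"
    using assms by (simp_all add: power_less_one_iff)
  then have "1 / sqrt (1 - \<epsilon>\<^sup>2) = exp (L / 2)"
    by (simp add: L_def ln_div exp_minus inverse_eq_divide powr_def flip: powr_half_sqrt)
  then have "(1 / sqrt (1 - \<epsilon>\<^sup>2)) ^ n = exp (real n * L / 2)"
    by (simp add: exp_of_nat_mult[symmetric])
  moreover have "- (\<epsilon>\<^sup>2 * (L / \<epsilon>\<^sup>2 * real n + 2 / \<epsilon>\<^sup>2 * ln (1 / \<delta>))) / 2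
      = - (real n * L / 2) + ln \<delta>"
    using \<open>0 < \<epsilon>\<^sup>2\<close> \<open>0 < \<delta>\<close> by (simp add: field_simps ln_div)
  ultimately show ?thesis
    using \<open>0 < \<delta>\<close> by (simp add: L_def flip: exp_add)
qed

theorem theorem2:
  fixes M :: "'a measure" and X :: "'a \<Rightarrow> real ^ 'n" and \<sigma> \<delta> \<epsilon> :: real
  assumes "prob_space M"
    and "\<sigma> > 0"
    and "sub_gaussian_vec M X (\<sigma>\<^sup>2)"
    and "0 < \<delta>" and "\<delta> < 1"
    and "0 < \<epsilon>" and "\<epsilon> < 1"
  shows "measure M {\<omega> \<in> space M. norm (X \<omega>) \<le>
           \<sigma> * sqrt (ln (1 / (1 - \<epsilon>\<^sup>2)) / \<epsilon>\<^sup>2 * real CARD('n)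
                     + 2 / \<epsilon>\<^sup>2 * ln (1 / \<delta>))} \<ge> 1 - \<delta>"
proof -
  interpret prob_space M by fact
  have [measurable]: "X \<in> borel_measurable M"
    using assms(3) unfolding sub_gaussian_vec_def by blast
  define A where "A = ln (1 / (1 - \<epsilon>\<^sup>2)) / \<epsilon>\<^sup>2 * real CARD('n) + 2 / \<epsilon>\<^sup>2 * ln (1 / \<delta>)"
  define r where "r = \<sigma> * sqrt A"
  define s where "s = \<epsilon> / \<sigma>"
  have "0 \<le> A"
    using assms(4-7) by (simp add: A_def power_less_one_iff)
  then have "0 \<le> r" and "s\<^sup>2 * r\<^sup>2 = \<epsilon>\<^sup>2 * A" and "\<sigma>\<^sup>2 * s\<^sup>2 = \<epsilon>\<^sup>2" and "s \<noteq> 0"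
    using assms(2,6) by (simp_all add: r_def s_def power_mult_distrib power_divide)
  have "measure M {\<omega> \<in> space M. r \<le> norm (X \<omega>)}
      \<le> (1 / sqrt (1 - \<sigma>\<^sup>2 * s\<^sup>2)) ^ CARD('n) * exp (- (s\<^sup>2 * r\<^sup>2) / 2)"
    using assms(6,7) \<open>s \<noteq> 0\<close> \<open>0 \<le> r\<close> \<open>\<sigma>\<^sup>2 * s\<^sup>2 = \<epsilon>\<^sup>2\<close>
    by (intro sub_gaussian_vec_norm_tail assms(1,3)) (simp_all add: power_less_one_iff)
  also have "\<dots> = \<delta>"
    unfolding \<open>\<sigma>\<^sup>2 * s\<^sup>2 = \<epsilon>\<^sup>2\<close> \<open>s\<^sup>2 * r\<^sup>2 = \<epsilon>\<^sup>2 * A\<close> A_def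
    by (rule tail_bound_at_radius_eq[OF assms(6,7,4)])
  finally have "measure M {\<omega> \<in> space M. r \<le> norm (X \<omega>)} \<le> \<delta>" .
  moreover have "measure M (space M - {\<omega> \<in> space M. r \<le> norm (X \<omega>)})
      \<le> measure M {\<omega> \<in> space M. norm (X \<omega>) \<le> r}"
    by (intro finite_measure_mono) auto
  ultimately show ?thesis
    by (simp add: prob_compl r_def A_def)
qed

end
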